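(* Let $(\vdash,\overline{\cdot},\widehat{\cdot})$ be a setting satisfying Pre-Relevance and let $\mathcal{S},\mathcal{S}'\subseteq\mathcal{L}$ with $\mathcal{S}\mid\mathcal{S}'$. If $a\in\mathit{Arg}_{\vdash}(\mathcal{S}\cup\mathcal{S}')$ attacks $b\in\mathit{Arg}_{\vdash}(\mathcal{S})$, then there is an $a'\in\mathit{Arg}_{\vdash}(\mathcal{S}\cap\mathsf{Supp}(a))$ that attacks $b$.
   Context: $\mathcal{L}$ is the set of formulas of a language built from propositional atoms; $\mathsf{Atoms}(\mathcal{S})$ is the set of atoms occurring in $\mathcal{S}$, and $\mathcal{S}_1\mid\mathcal{S}_2$ means $\mathsf{Atoms}(\mathcal{S}_1)\cap\mathsf{Atoms}(\mathcal{S}_2)=\emptyset$. A setting is $(\vdash,\overline{\cdot},\widehat{\cdot})$ with ${\vdash}\subseteq\wp_{\sf fin}(\mathcal{L})\times\mathcal{L}$ arbitrary, $\overline{\cdot}:\mathcal{L}\to\wp(\mathcal{L})$, $\widehat{\cdot}$ assigning to each nonempty finite set a finite set of formulas, with $\widehat{\emptyset}=\emptyset$. $\mathit{Arg}_{\vdash}(\mathcal{S})=\{(\Gamma,\gamma):\Gamma\subseteq\mathcal{S}\text{ finite},\Gamma\vdash\gamma\}$, $\mathsf{Supp}((\Gamma,\gamma))=\Gamma$. $(\Gamma,\gamma)$ attacks $(\Gamma',\gamma')$ iff $\gamma\in\overline{\phi}$ for some $\phi\in\widehat{\Gamma'}$. Pre-Relevance of the setting: (a) for all $\mathcal{S}_1,\mathcal{S}_2,\phi$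 with $\mathcal{S}_1\cup\{\phi\}\mid\mathcal{S}_2$, $\mathcal{S}_1\cup\mathcal{S}_2\vdash\phi$ implies $\mathcal{S}_1'\vdash\phi$ for some $\mathcal{S}_1'\subseteq\mathcal{S}_1$; (b) primeness: for all sets of atoms $\mathcal{A}_1\mid\mathcal{A}_2$, all finite $\mathcal{S}_1,\mathcal{T}_1,\mathcal{S}_2,\mathcal{T}_2$ with $\mathsf{Atoms}(\mathcal{S}_i),\mathsf{Atoms}(\mathcal{T}_i)\subseteq\mathcal{A}_i$, and all $\phi,\psi$ with $\psi\in\overline{\phi}$, $\phi\in\widehat{\mathcal{T}_1\cup\mathcal{T}_2}$: if $\mathcal{S}_1\cup\mathcal{S}_2\vdash\psi$ then there are $i\in\{1,2\}$, $\mathcal{S}_i'\subseteq\mathcal{S}_i$, $\phi_i\in\widehat{\mathcal{T}_i}$, $\psi_i\in\overline{\phi_i}$ with $\mathcal{S}_i'\vdash\psi_i$; (c) $\widehat{\Delta}\subseteq\widehat{\Delta\cup\Delta'}$ for all finite $\Delta,\Delta'$. *)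

theory Defs
  imports Main
begin

definition Atoms :: "('f \<Rightarrow> 'a set) \<Rightarrow> 'f set \<Rightarrow> 'a set" where
  "Atoms atoms S = (\<Union>\<phi>\<in>S. atoms \<phi>)"

definition indep :: "('f \<Rightarrow> 'a set) \<Rightarrow> 'f set \<Rightarrow> 'f set \<Rightarrow> bool" where
  "indep atoms S1 S2 \<longleftrightarrow> Atoms atoms S1 \<inter> Atoms atoms S2 = {}"

definition setting ::
  "('f set \<Rightarrow> 'f \<Rightarrow> bool) \<Rightarrow> ('f \<Rightarrow> 'f set) \<Rightarrow> ('f set \<Rightarrow> 'f set) \<Rightarrow> bool" where
  "setting vdash contrary hat \<longleftrightarrow>
     (\<forall>\<Gamma> \<phi>. vdash \<Gamma> \<phi> \<longrightarrow> finite \<Gamma>) \<and>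
     (\<forall>\<Delta>. finite \<Delta> \<longrightarrow> finite (hat \<Delta>)) \<and>
     hat {} = {}"

definition Arg :: "('f set \<Rightarrow> 'f \<Rightarrow> bool) \<Rightarrow> 'f set \<Rightarrow> ('f set \<times> 'f) set" where
  "Arg vdash S = {(\<Gamma>, \<gamma>). \<Gamma> \<subseteq> S \<and> finite \<Gamma> \<and> vdash \<Gamma> \<gamma>}"

definition Supp :: "'f set \<times> 'f \<Rightarrow> 'f set" where
  "Supp a = fst a"

definition attacks ::
  "('f \<Rightarrow> 'f set) \<Rightarrow> ('f set \<Rightarrow> 'f set) \<Rightarrow> 'f set \<times> 'f \<Rightarrow> 'f set \<times> 'f \<Rightarrow> bool" where
  "attacks contrary hat a b \<longleftrightarrow> (\<exists>\<phi>\<in>hat (fst b). snd a \<in> contrary \<phi>)"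

definition pre_relevance ::
  "('f \<Rightarrow> 'a set) \<Rightarrow> ('f set \<Rightarrow> 'f \<Rightarrow> bool) \<Rightarrow> ('f \<Rightarrow> 'f set) \<Rightarrow> ('f set \<Rightarrow> 'f set) \<Rightarrow> bool" where
  "pre_relevance atoms vdash contrary hat \<longleftrightarrow>
     \<comment> \<open>(a)\<close>
     (\<forall>S1 S2 \<phi>. indep atoms (S1 \<union> {\<phi>}) S2 \<longrightarrow> vdash (S1 \<union> S2) \<phi> \<longrightarrow>
        (\<exists>S1'. S1' \<subseteq> S1 \<and> vdash S1' \<phi>)) \<and>
     \<comment> \<open>(b) primeness\<close>
     (\<forall>(A1::'a set) A2 S1 T1 S2 T2 \<phi> \<psi>.
        A1 \<inter> A2 = {} \<longrightarrow>
        finite S1 \<longrightarrow> finite T1 \<longrightarrow> finite S2 \<longrightarrow> finite T2 \<longrightarrow>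
        Atoms atoms S1 \<subseteq> A1 \<longrightarrow> Atoms atoms T1 \<subseteq> A1 \<longrightarrow>
        Atoms atoms S2 \<subseteq> A2 \<longrightarrow> Atoms atoms T2 \<subseteq> A2 \<longrightarrow>
        \<psi> \<in> contrary \<phi> \<longrightarrow> \<phi> \<in> hat (T1 \<union> T2) \<longrightarrow> vdash (S1 \<union> S2) \<psi> \<longrightarrow>
        (\<exists>S1' \<phi>1 \<psi>1. S1' \<subseteq> S1 \<and> \<phi>1 \<in> hat T1 \<and> \<psi>1 \<in> contrary \<phi>1 \<and> vdash S1' \<psi>1) \<or>
        (\<exists>S2' \<phi>2 \<psi>2. S2' \<subseteq> S2 \<and> \<phi>2 \<in> hat T2 \<and> \<psi>2 \<in> contrary \<phi>2 \<and> vdash S2' \<psi>2)) \<and>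
     \<comment> \<open>(c)\<close>
     (\<forall>\<Delta> \<Delta>'. finite \<Delta> \<longrightarrow> finite \<Delta>' \<longrightarrow> hat \<Delta> \<subseteq> hat (\<Delta> \<union> \<Delta>'))"

end

theory Submission
  imports Defs
begin

text \<open>Split the attacker's support \<open>\<Gamma>\<close> into \<open>\<Gamma> \<inter> S\<close> and \<open>\<Gamma> - S \<subseteq> S'\<close>, and the
  attacked support \<open>\<Delta> \<subseteq> S\<close> into \<open>\<Delta>\<close> and \<open>{}\<close>. Primeness for this split offers two
  alternatives; the one through \<open>\<Gamma> - S\<close> needs an element of \<open>hat {} = {}\<close>, so a subset of
  \<open>\<Gamma> \<inter> S\<close> already derives a contrary of an element of \<open>hat \<Delta>\<close>.\<close>

lemma Atoms_mono: "X \<subseteq> Y \<Longrightarrow> Atoms atoms X \<subseteq> Atoms atoms Y"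
  by (auto simp: Atoms_def)

lemma pre_relevance_prime:
  assumes "pre_relevance atoms vdash contrary hat"
    and "A1 \<inter> A2 = {}"
    and "finite S1" "finite T1" "finite S2" "finite T2"
    and "Atoms atoms S1 \<subseteq> A1" "Atoms atoms T1 \<subseteq> A1"
    and "Atoms atoms S2 \<subseteq> A2" "Atoms atoms T2 \<subseteq> A2"
    and "\<psi> \<in> contrary \<phi>" "\<phi> \<in> hat (T1 \<union> T2)" "vdash (S1 \<union> S2) \<psi>"
  shows "(\<exists>S1' \<subseteq> S1. \<exists>\<phi>1 \<in> hat T1. \<exists>\<psi>1 \<in> contrary \<phi>1. vdash S1' \<psi>1) \<or>
         (\<exists>S2' \<subseteq> S2. \<exists>\<phi>2 \<in> hat T2. \<exists>\<psi>2 \<in> contrary \<phi>2. vdash S2' \<psi>2)"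
proof -
  note prime = assms(1)[unfolded pre_relevance_def, THEN conjunct2, THEN conjunct1]
  from prime[rule_format, OF assms(2-)] show ?thesis by blast
qed

lemma pre_relevance_attack_within_part:
  assumes pre: "pre_relevance atoms vdash contrary hat"
    and hat_empty: "hat {} = {}"
    and ind: "indep atoms S S'"
    and \<Gamma>: "\<Gamma> \<subseteq> S \<union> S'" "finite \<Gamma>" "vdash \<Gamma> \<psi>"
    and \<Delta>: "\<Delta> \<subseteq> S" "finite \<Delta>"
    and attack: "\<phi> \<in> hat \<Delta>" "\<psi> \<in> contrary \<phi>"
  shows "\<exists>\<Gamma>' \<subseteq> \<Gamma> \<inter> S. \<exists>\<phi>' \<in> hat \<Delta>. \<exists>\<psi>' \<in> contrary \<phi>'. vdash \<Gamma>' \<psi>'"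
proof -
  have disjoint: "Atoms atoms S \<inter> Atoms atoms S' = {}"
    using ind by (simp add: indep_def)
  have finite_parts: "finite (\<Gamma> \<inter> S)" "finite (\<Gamma> - S)"
    using \<Gamma>(2) by simp_all
  have atoms_parts: "Atoms atoms (\<Gamma> \<inter> S) \<subseteq> Atoms atoms S" "Atoms atoms \<Delta> \<subseteq> Atoms atoms S"
    "Atoms atoms (\<Gamma> - S) \<subseteq> Atoms atoms S'" "Atoms atoms {} \<subseteq> Atoms atoms S'"
    using \<Gamma>(1) \<Delta>(1) by (auto intro!: Atoms_mono)
  have "\<phi> \<in> hat (\<Delta> \<union> {})" "vdash ((\<Gamma> \<inter> S) \<union> (\<Gamma> - S)) \<psi>"
    using attack \<Gamma>(3) by (simp_all add: Int_Diff_Un)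
  from pre_relevance_prime[OF pre disjoint finite_parts(1) \<Delta>(2) finite_parts(2) finite.emptyI
      atoms_parts attack(2) this]
  have "(\<exists>\<Gamma>' \<subseteq> \<Gamma> \<inter> S. \<exists>\<phi>' \<in> hat \<Delta>. \<exists>\<psi>' \<in> contrary \<phi>'. vdash \<Gamma>' \<psi>') \<or>
      (\<exists>\<Gamma>' \<subseteq> \<Gamma> - S. \<exists>\<phi>' \<in> hat {}. \<exists>\<psi>' \<in> contrary \<phi>'. vdash \<Gamma>' \<psi>')" .
  then show ?thesis using hat_empty by blast
qed

theorem lemma2:
  fixes atoms :: "'f \<Rightarrow> 'a set"
    and vdash :: "'f set \<Rightarrow> 'f \<Rightarrow> bool"
    and contrary :: "'f \<Rightarrow> 'f set"
    and hat :: "'f set \<Rightarrow> 'f set"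
  assumes lang: "\<forall>\<phi>. finite (atoms \<phi>)"
    and set: "setting vdash contrary hat"
    and pre: "pre_relevance atoms vdash contrary hat"
    and ind: "indep atoms S S'"
    and a: "a \<in> Arg vdash (S \<union> S')"
    and b: "b \<in> Arg vdash S"
    and att: "attacks contrary hat a b"
  shows "\<exists>a' \<in> Arg vdash (S \<inter> Supp a). attacks contrary hat a' b"
proof -
  obtain \<Gamma> \<psi> where a_eq: "a = (\<Gamma>, \<psi>)" by (cases a)
  obtain \<Delta> \<delta> where b_eq: "b = (\<Delta>, \<delta>)" by (cases b)
  obtain \<phi> where "\<phi> \<in> hat \<Delta>" "\<psi> \<in> contrary \<phi>"
    using att by (auto simp: attacks_def a_eq b_eq)
  moreover have "\<Gamma> \<subseteq> S \<union> S'" "finite \<Gamma>" "vdash \<Gamma> \<psi>" "\<Delta> \<subseteq> S" "finite \<Delta>"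
    using a b by (auto simp: Arg_def a_eq b_eq)
  moreover have "hat {} = {}" using set by (simp add: setting_def)
  ultimately obtain \<Gamma>' \<phi>' \<psi>' where
    "\<Gamma>' \<subseteq> \<Gamma> \<inter> S" "\<phi>' \<in> hat \<Delta>" "\<psi>' \<in> contrary \<phi>'" "vdash \<Gamma>' \<psi>'"
    using pre_relevance_attack_within_part[OF pre _ ind] by metis
  moreover have "finite \<Gamma>'" using \<open>vdash \<Gamma>' \<psi>'\<close> set by (auto simp: setting_def)
  ultimately have "(\<Gamma>', \<psi>') \<in> Arg vdash (S \<inter> Supp a)" "attacks contrary hat (\<Gamma>', \<psi>') b"
    by (auto simp: Arg_def Supp_def attacks_def a_eq b_eq)
  then show ?thesis by blast
qed

end
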